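(* Let $N\ge 2$ be an even integer, $0<\varepsilon\le N^{-1}$, $\alpha>0$, $\sigma>0$, and let $\varphi$ be as described in the context, with $\psi=e^{-\varphi}$ and $\max|\psi'|:=\max_{t\in[0,1/2]}|\psi'(t)|$. Let $x_0<x_1<\dots<x_N$ be the layer-adapted mesh described in the context and $h_i=x_i-x_{i-1}$. For $i=N/2+1,\dots,N$ put $$\Theta_i=\min\Big\{\frac{h_i}{\varepsilon},1\Big\}\,e^{-\alpha(1-x_i)/(\sigma\varepsilon)}.$$ Then there is a constant $C>0$ independent of $\varepsilon$ and $N$ such that $$\max_{N/2+1\le i\le N}\Theta_i\le C N^{-1}\max|\psi'| ,\qquad \sum_{i=N/2+1}^{N}\Theta_i\le C .$$
   Context: Layer-adapted mesh on $[0,1]$: let $\varphi:[0,1/2]\to\mathbb R$ be smooth with $\varphi(0)=0$, $\varphi'>0$, $\varphi''\ge 0$. Set $\tau=\frac{\sigma\varepsilon}{\alpha}\varphi(1/2)$ and assume $\tau\le 1/2$. The mesh points are $x_i=\lambda(i/N)$, $i=0,\dots,N$, where $\lambda(t)=2(1-\tau)t$ for $t\in[0,1/2]$ and $\lambda(t)=1-\frac{\sigma\varepsilon}{\alpha}\varphi(1-t)$ for $t\in[1/2,1]$. Thus the mesh is uniform on $[0,1-\tau]$ with $N/2$ cells and graded on $[1-\tau,1]$ with $N/2$ cells. *)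

theory Defs
  imports "HOL-Analysis.Analysis"
begin

definition smooth_with_derivs :: "(nat \<Rightarrow> real \<Rightarrow> real) \<Rightarrow> (real \<Rightarrow> real) \<Rightarrow> real set \<Rightarrow> bool" where
  "smooth_with_derivs D f S \<longleftrightarrow>
     (\<forall>t\<in>S. D 0 t = f t) \<and>
     (\<forall>k. \<forall>t\<in>S. (D k has_real_derivative D (Suc k) t) (at t within S))"

definition mesh_tau :: "real \<Rightarrow> real \<Rightarrow> real \<Rightarrow> (real \<Rightarrow> real) \<Rightarrow> real" where
  "mesh_tau \<sigma> \<epsilon> \<alpha> \<phi> = \<sigma> * \<epsilon> / \<alpha> * \<phi> (1/2)"

definition mesh_lambda :: "real \<Rightarrow> real \<Rightarrow> real \<Rightarrow> (real \<Rightarrow> real) \<Rightarrow> real \<Rightarrow> real" where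
  "mesh_lambda \<sigma> \<epsilon> \<alpha> \<phi> t =
     (if t \<le> 1/2 then 2 * (1 - mesh_tau \<sigma> \<epsilon> \<alpha> \<phi>) * t
      else 1 - \<sigma> * \<epsilon> / \<alpha> * \<phi> (1 - t))"

definition mesh_x :: "real \<Rightarrow> real \<Rightarrow> real \<Rightarrow> (real \<Rightarrow> real) \<Rightarrow> nat \<Rightarrow> nat \<Rightarrow> real" where
  "mesh_x \<sigma> \<epsilon> \<alpha> \<phi> N i = mesh_lambda \<sigma> \<epsilon> \<alpha> \<phi> (real i / real N)"

definition mesh_Theta :: "real \<Rightarrow> real \<Rightarrow> real \<Rightarrow> (real \<Rightarrow> real) \<Rightarrow> nat \<Rightarrow> nat \<Rightarrow> real" where
  "mesh_Theta \<sigma> \<epsilon> \<alpha> \<phi> N i =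
     min ((mesh_x \<sigma> \<epsilon> \<alpha> \<phi> N i - mesh_x \<sigma> \<epsilon> \<alpha> \<phi> N (i - 1)) / \<epsilon>) 1
     * exp (- \<alpha> * (1 - mesh_x \<sigma> \<epsilon> \<alpha> \<phi> N i) / (\<sigma> * \<epsilon>))"

end

theory Submission
  imports Defs
begin

text \<open>On the graded half the nodes are \<open>x\<^sub>i = 1 - (\<sigma>\<epsilon>/\<alpha>) \<phi>(1 - i/N)\<close>, so with
  \<open>a = 1 - i/N\<close>, \<open>b = a + 1/N\<close> and \<open>\<psi> = exp \<circ> uminus \<circ> \<phi>\<close> one gets
  \<open>\<Theta>\<^sub>i = min ((\<sigma>/\<alpha>)(\<phi> b - \<phi> a)) 1 \<cdot> \<psi> a\<close>.  The elementary bound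
  \<open>min d 1 \<le> 2 (1 - e\<^sup>-\<^sup>d)\<close> and monotonicity of \<open>\<phi>\<close> turn this into
  \<open>\<Theta>\<^sub>i \<le> 2 max (\<sigma>/\<alpha>) 1 (\<psi> a - \<psi> b)\<close>.  The mean value
  theorem bounds each difference by \<open>max |\<psi>'| / N\<close>, and the differences telescope to
  \<open>\<psi> 0 - \<psi> (1/2) \<le> 1\<close>.\<close>

lemma min_le_two_mul_one_minus_exp:
  fixes d :: real
  assumes "d \<ge> 0"
  shows "min d 1 \<le> 2 * (1 - exp (- d))"
proof (cases "d \<le> 1")
  case True
  have "exp (- d) = 1 / exp d" by (simp add: exp_minus divide_inverse)
  also have "\<dots> \<le> 1 / (1 + d)"
    using exp_ge_add_one_self[of d] assms by (intro frac_le) auto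
  also have "\<dots> \<le> 1 - d / 2"
    using assms True by (simp add: field_simps) (simp add: algebra_simps mult_left_le)
  finally show ?thesis using True by simp
next
  case False
  have "exp (- d) = 1 / exp d" by (simp add: exp_minus divide_inverse)
  also have "\<dots> \<le> 1 / 2"
    using exp_ge_add_one_self[of d] False by (intro frac_le) linarith+
  finally show ?thesis using False by simp
qed

lemma min_mult_le_one_minus_exp:
  fixes c d :: real
  assumes "c > 0" and "d \<ge> 0"
  shows "min (c * d) 1 \<le> 2 * max c 1 * (1 - exp (- d))"
proof -
  have "min (c * d) 1 \<le> max c 1 * min d 1"
    using assms by (smt (verit, best) mult_cancel_left1 mult_cancel_right1 mult_left_le_one_le)
  also have "\<dots> \<le> max c 1 * (2 * (1 - exp (- d)))"
    using min_le_two_mul_one_minus_exp[OF assms(2)] by (intro mult_left_mono) auto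
  finally show ?thesis by (simp add: algebra_simps)
qed

lemma mesh_x_graded:
  assumes "even N" and "N > 0" and "N div 2 \<le> j"
  shows "mesh_x \<sigma> \<epsilon> \<alpha> \<phi> N j = 1 - \<sigma> * \<epsilon> / \<alpha> * \<phi> (1 - real j / real N)"
proof (cases "j = N div 2")
  case True
  with assms(1,2) have "real j / real N = 1/2" by (auto elim!: evenE)
  then show ?thesis unfolding mesh_x_def mesh_lambda_def mesh_tau_def
    by (simp add: algebra_simps)
next
  case False
  with assms have "real j / real N > 1/2" by (auto elim!: evenE simp: field_simps)
  then show ?thesis unfolding mesh_x_def mesh_lambda_def by simp
qed

lemma mesh_Theta_graded:
  assumes "\<alpha> > 0" and "\<sigma> > 0" and "\<epsilon> > 0" and "even N" and "N > 0" and "N div 2 < i"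
  shows "mesh_Theta \<sigma> \<epsilon> \<alpha> \<phi> N i =
           min (\<sigma> / \<alpha> * (\<phi> (1 - real (i - 1) / real N) - \<phi> (1 - real i / real N))) 1
           * exp (- \<phi> (1 - real i / real N))"
proof -
  have xi: "mesh_x \<sigma> \<epsilon> \<alpha> \<phi> N i = 1 - \<sigma> * \<epsilon> / \<alpha> * \<phi> (1 - real i / real N)"
    using assms(4-6) by (intro mesh_x_graded) auto
  have xi1: "mesh_x \<sigma> \<epsilon> \<alpha> \<phi> N (i - 1) = 1 - \<sigma> * \<epsilon> / \<alpha> * \<phi> (1 - real (i - 1) / real N)"
    using assms(4-6) by (intro mesh_x_graded) auto
  have "mesh_x \<sigma> \<epsilon> \<alpha> \<phi> N i - mesh_x \<sigma> \<epsilon> \<alpha> \<phi> N (i - 1)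
          = \<epsilon> * (\<sigma> / \<alpha> * (\<phi> (1 - real (i - 1) / real N) - \<phi> (1 - real i / real N)))"
    unfolding xi xi1 by (simp add: algebra_simps)
  moreover have "- \<alpha> * (1 - mesh_x \<sigma> \<epsilon> \<alpha> \<phi> N i) / (\<sigma> * \<epsilon>) = - \<phi> (1 - real i / real N)"
    unfolding xi using assms(1-3) by (simp add: field_simps)
  ultimately show ?thesis
    unfolding mesh_Theta_def using assms(3) by simp
qed

lemma graded_nodes_in_half:
  assumes "even N" and "N > 0" and "i \<in> {N div 2 + 1..N}"
  shows "0 \<le> 1 - real i / real N" and "1 - real (i - 1) / real N \<le> 1/2"
    and "(1 - real (i - 1) / real N) - (1 - real i / real N) = 1 / real N"
proof -
  show "0 \<le> 1 - real i / real N" using assms(2,3) by (simp add: field_simps)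
  have "1/2 = real (N div 2) / real N" using assms(1,2) by (auto elim!: evenE)
  also have "\<dots> \<le> real (i - 1) / real N" using assms(3) by (intro divide_right_mono) auto
  finally show "1 - real (i - 1) / real N \<le> 1/2" by linarith
  show "(1 - real (i - 1) / real N) - (1 - real i / real N) = 1 / real N"
    using assms(3) by (simp add: of_nat_diff field_simps)
qed

lemma mesh_Theta_le_exp_diff:
  assumes "\<alpha> > 0" and "\<sigma> > 0" and "\<epsilon> > 0" and "even N" and "N > 0"
    and "i \<in> {N div 2 + 1..N}"
    and mono: "\<And>x y. 0 \<le> x \<Longrightarrow> x \<le> y \<Longrightarrow> y \<le> 1/2 \<Longrightarrow> \<phi> x \<le> \<phi> y"
  shows "mesh_Theta \<sigma> \<epsilon> \<alpha> \<phi> N i \<le>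
           2 * max (\<sigma> / \<alpha>) 1 * (exp (- \<phi> (1 - real i / real N)) - exp (- \<phi> (1 - real (i - 1) / real N)))"
proof -
  define a where "a = 1 - real i / real N"
  define b where "b = 1 - real (i - 1) / real N"
  have "0 \<le> a" and "b \<le> 1/2" and "b - a = 1 / real N"
    unfolding a_def b_def by (fact graded_nodes_in_half[OF assms(4-6)])+
  moreover have "1 / real N > 0" using assms(5) by simp
  ultimately have "\<phi> a \<le> \<phi> b" by (intro mono) linarith+
  have "mesh_Theta \<sigma> \<epsilon> \<alpha> \<phi> N i = min (\<sigma> / \<alpha> * (\<phi> b - \<phi> a)) 1 * exp (- \<phi> a)"
    unfolding a_def b_def using assms(6) by (intro mesh_Theta_graded) (use assms in auto)
  also have "\<dots> \<le> 2 * max (\<sigma> / \<alpha>) 1 * (1 - exp (- (\<phi> b - \<phi> a))) * exp (- \<phi> a)"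
    using min_mult_le_one_minus_exp[of "\<sigma> / \<alpha>" "\<phi> b - \<phi> a"] \<open>\<phi> a \<le> \<phi> b\<close> assms(1,2)
    by (intro mult_right_mono) auto
  also have "\<dots> = 2 * max (\<sigma> / \<alpha>) 1 * (exp (- \<phi> a) - exp (- \<phi> b))"
    by (simp add: algebra_simps flip: exp_add)
  finally show ?thesis unfolding a_def b_def .
qed

lemma mesh_Theta_le_Lipschitz:
  assumes "\<alpha> > 0" and "\<sigma> > 0" and "\<epsilon> > 0" and "even N" and "N > 0"
    and "i \<in> {N div 2 + 1..N}"
    and mono: "\<And>x y. 0 \<le> x \<Longrightarrow> x \<le> y \<Longrightarrow> y \<le> 1/2 \<Longrightarrow> \<phi> x \<le> \<phi> y"
    and lipschitz: "\<And>x y. x \<in> {0..1/2} \<Longrightarrow> y \<in> {0..1/2} \<Longrightarrow>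
                      \<bar>exp (- \<phi> x) - exp (- \<phi> y)\<bar> \<le> M * \<bar>x - y\<bar>"
  shows "mesh_Theta \<sigma> \<epsilon> \<alpha> \<phi> N i \<le> 2 * max (\<sigma> / \<alpha>) 1 / real N * M"
proof -
  define a where "a = 1 - real i / real N"
  define b where "b = 1 - real (i - 1) / real N"
  have "0 \<le> a" and "b \<le> 1/2" and "b - a = 1 / real N"
    unfolding a_def b_def by (fact graded_nodes_in_half[OF assms(4-6)])+
  moreover have "1 / real N > 0" using assms(5) by simp
  ultimately have "a \<in> {0..1/2}" "b \<in> {0..1/2}" "\<bar>a - b\<bar> = 1 / real N"
    unfolding atLeastAtMost_iff by linarith+
  then have "exp (- \<phi> a) - exp (- \<phi> b) \<le> M / real N"
    using lipschitz[of a b] by simp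
  moreover have "mesh_Theta \<sigma> \<epsilon> \<alpha> \<phi> N i \<le> 2 * max (\<sigma> / \<alpha>) 1 * (exp (- \<phi> a) - exp (- \<phi> b))"
    unfolding a_def b_def using assms(1-7) by (rule mesh_Theta_le_exp_diff)
  ultimately show ?thesis
    by (smt (verit) mult_left_mono times_divide_eq_left times_divide_eq_right max.cobounded2)
qed

lemma sum_mesh_Theta_le:
  assumes "\<alpha> > 0" and "\<sigma> > 0" and "\<epsilon> > 0" and "even N" and "N > 0"
    and mono: "\<And>x y. 0 \<le> x \<Longrightarrow> x \<le> y \<Longrightarrow> y \<le> 1/2 \<Longrightarrow> \<phi> x \<le> \<phi> y"
    and "\<phi> 0 = 0"
  shows "(\<Sum>i=N div 2 + 1..N. mesh_Theta \<sigma> \<epsilon> \<alpha> \<phi> N i) \<le> 2 * max (\<sigma> / \<alpha>) 1"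
proof -
  define C where "C = 2 * max (\<sigma> / \<alpha>) 1"
  define g where "g j = exp (- \<phi> (1 - real j / real N))" for j
  have "(\<Sum>i=N div 2 + 1..N. mesh_Theta \<sigma> \<epsilon> \<alpha> \<phi> N i) \<le> (\<Sum>i=N div 2 + 1..N. C * (g i - g (i - 1)))"
    unfolding C_def g_def using assms(1-6) by (intro sum_mono mesh_Theta_le_exp_diff)
  also have "\<dots> = C * (g N - g (N div 2))"
    using sum_telescope''[of "N div 2" N g] by (simp add: sum_distrib_left[symmetric])
  also have "\<dots> \<le> C"
    using assms(5,7) unfolding C_def g_def by (simp add: mult_left_le)
  finally show ?thesis unfolding C_def .
qed

lemma smooth_with_derivs_has_real_derivative:
  assumes "smooth_with_derivs D f S" and "t \<in> S"
  shows "(f has_real_derivative D 1 t) (at t within S)"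
proof -
  have "(D 0 has_real_derivative D 1 t) (at t within S)" and "\<forall>s\<in>S. D 0 s = f s"
    using assms unfolding smooth_with_derivs_def by auto
  then show ?thesis
    using has_field_derivative_transform_within[OF _ zero_less_one assms(2)] assms(2) by auto
qed

lemma smooth_with_derivs_continuous_on:
  assumes "smooth_with_derivs D f S"
  shows "continuous_on S f" and "continuous_on S (D k)"
  using assms smooth_with_derivs_has_real_derivative[OF assms]
  by (auto intro!: DERIV_continuous_on simp: smooth_with_derivs_def)

lemma nonneg_deriv_imp_mono_Icc:
  fixes f :: "real \<Rightarrow> real"
  assumes deriv: "\<And>t. t \<in> {a..b} \<Longrightarrow> (f has_real_derivative f' t) (at t within {a..b})"
    and nonneg: "\<And>t. t \<in> {a..b} \<Longrightarrow> f' t \<ge> 0"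
    and "a \<le> x" and "x \<le> y" and "y \<le> b"
  shows "f x \<le> f y"
proof (rule DERIV_nonneg_imp_increasing_open[OF \<open>x \<le> y\<close>])
  fix t assume "x < t" "t < y"
  then have "(f has_real_derivative f' t) (at t)" and "f' t \<ge> 0"
    using deriv[of t] nonneg[of t] at_within_Icc_at[of a t b] assms(3-5) by auto
  then show "\<exists>d. (f has_real_derivative d) (at t) \<and> d \<ge> 0" by blast
next
  have "continuous_on {a..b} f" using deriv by (rule DERIV_continuous_on)
  then show "continuous_on {x..y} f" by (rule continuous_on_subset) (use assms(3-5) in auto)
qed

lemma abs_diff_le_SUP_abs_deriv:
  fixes h :: "real \<Rightarrow> real"
  assumes deriv: "\<And>t. t \<in> {a..b} \<Longrightarrow> (h has_real_derivative g t) (at t within {a..b})"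
    and bdd: "bdd_above ((\<lambda>t. \<bar>g t\<bar>) ` {a..b})"
    and "x \<in> {a..b}" and "y \<in> {a..b}"
  shows "\<bar>h x - h y\<bar> \<le> (SUP t\<in>{a..b}. \<bar>g t\<bar>) * \<bar>x - y\<bar>"
  using field_differentiable_bound[OF convex_real_interval(5) deriv _ assms(3,4)]
    cSUP_upper[OF _ bdd] by auto

lemma bdd_above_abs_deriv_exp_neg:
  assumes smooth: "smooth_with_derivs D f {a..b}" and "a < b"
    and deriv: "\<And>t. t \<in> {a..b} \<Longrightarrow> ((\<lambda>s. exp (- f s)) has_real_derivative g t) (at t within {a..b})"
  shows "bdd_above ((\<lambda>t. \<bar>g t\<bar>) ` {a..b})"
proof -
  have g_eq: "g t = - exp (- f t) * D 1 t" if "t \<in> {a..b}" for t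
  proof (rule has_field_derivative_unique[OF deriv[OF that]])
    show "((\<lambda>s. exp (- f s)) has_real_derivative - exp (- f t) * D 1 t) (at t within {a..b})"
      using smooth_with_derivs_has_real_derivative[OF smooth that]
      by (auto intro!: derivative_eq_intros)
    show "at t within {a..b} \<noteq> bot"
      using that \<open>a < b\<close> by (auto simp: trivial_limit_within islimpt_Icc)
  qed
  have "continuous_on {a..b} (\<lambda>t. \<bar>- exp (- f t) * D 1 t\<bar>)"
    using smooth_with_derivs_continuous_on[OF smooth] by (intro continuous_intros) auto
  then have "bdd_above ((\<lambda>t. \<bar>- exp (- f t) * D 1 t\<bar>) ` {a..b})"
    by (intro bounded_imp_bdd_above compact_imp_bounded compact_continuous_image) auto
  moreover have "(\<lambda>t. \<bar>g t\<bar>) ` {a..b} = (\<lambda>t. \<bar>- exp (- f t) * D 1 t\<bar>) ` {a..b}"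
    using g_eq by (intro image_cong) auto
  ultimately show ?thesis by simp
qed

theorem lemma1:
  fixes \<alpha> \<sigma> :: real and \<phi> \<psi>' :: "real \<Rightarrow> real" and D :: "nat \<Rightarrow> real \<Rightarrow> real"
  assumes "\<alpha> > 0" and "\<sigma> > 0"
    and "smooth_with_derivs D \<phi> {0..1/2}"
    and "\<phi> 0 = 0"
    and "\<forall>t\<in>{0..1/2}. D 1 t > 0"
    and "\<forall>t\<in>{0..1/2}. D 2 t \<ge> 0"
    and "\<forall>t\<in>{0..1/2}. ((\<lambda>s. exp (- \<phi> s)) has_real_derivative \<psi>' t) (at t within {0..1/2})"
  shows "\<exists>C>0. \<forall>(N::nat) (\<epsilon>::real).
           N \<ge> 2 \<longrightarrow> even N \<longrightarrow> 0 < \<epsilon> \<longrightarrow> \<epsilon> \<le> 1 / real N \<longrightarrow>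
           mesh_tau \<sigma> \<epsilon> \<alpha> \<phi> \<le> 1/2 \<longrightarrow>
           (\<forall>i\<in>{N div 2 + 1..N}.
              mesh_Theta \<sigma> \<epsilon> \<alpha> \<phi> N i \<le> C / real N * (SUP t\<in>{0..1/2}. \<bar>\<psi>' t\<bar>)) \<and>
           (\<Sum>i=N div 2 + 1..N. mesh_Theta \<sigma> \<epsilon> \<alpha> \<phi> N i) \<le> C"
proof -
  define M where "M = (SUP t\<in>{0..1/2}. \<bar>\<psi>' t\<bar>)"
  have \<phi>_mono: "\<phi> x \<le> \<phi> y" if "0 \<le> x" "x \<le> y" "y \<le> 1/2" for x y
  proof (rule nonneg_deriv_imp_mono_Icc[OF _ _ that])
    show "(\<phi> has_real_derivative D 1 t) (at t within {0..1/2})" if "t \<in> {0..1/2}" for t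
      using assms(3) that by (rule smooth_with_derivs_has_real_derivative)
    show "D 1 t \<ge> 0" if "t \<in> {0..1/2}" for t
      using assms(5) that by (simp add: less_imp_le)
  qed
  have \<psi>_lipschitz: "\<bar>exp (- \<phi> x) - exp (- \<phi> y)\<bar> \<le> M * \<bar>x - y\<bar>" if "x \<in> {0..1/2}" "y \<in> {0..1/2}" for x y
    unfolding M_def using assms(3,7) that
    by (intro abs_diff_le_SUP_abs_deriv bdd_above_abs_deriv_exp_neg) auto
  show ?thesis
  proof (intro exI[of _ "2 * max (\<sigma> / \<alpha>) 1"] conjI allI impI ballI)
    fix N :: nat and \<epsilon> :: real and i
    assume "N \<ge> 2" "even N" "0 < \<epsilon>" "\<epsilon> \<le> 1 / real N" "mesh_tau \<sigma> \<epsilon> \<alpha> \<phi> \<le> 1/2"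
      and "i \<in> {N div 2 + 1..N}"
    then show "mesh_Theta \<sigma> \<epsilon> \<alpha> \<phi> N i \<le> 2 * max (\<sigma> / \<alpha>) 1 / real N * (SUP t\<in>{0..1/2}. \<bar>\<psi>' t\<bar>)"
      using assms(1,2) \<phi>_mono \<psi>_lipschitz unfolding M_def by (intro mesh_Theta_le_Lipschitz) auto
  next
    fix N :: nat and \<epsilon> :: real
    assume "N \<ge> 2" "even N" "0 < \<epsilon>"
    then show "(\<Sum>i=N div 2 + 1..N. mesh_Theta \<sigma> \<epsilon> \<alpha> \<phi> N i) \<le> 2 * max (\<sigma> / \<alpha>) 1"
      using assms(1,2,4) \<phi>_mono by (intro sum_mesh_Theta_le) auto
  qed simp
qed

end
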